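(* Let $V$ be a finite-dimensional complex vector space, $\alpha\in\mathfrak{gl}(V)$, and $\mathfrak{h}=V\rtimes_\alpha\mathbb{C}$ the Lie algebra $V\oplus\mathbb{C}u$ in which $V$ is an abelian ideal and $[u,v]=\alpha(v)$ for $v\in V$. Fix a basis of $V$ in which $\alpha$ is in Jordan normal form: each $r$-Jordan block $V(\lambda)$ of eigenvalue $\lambda$ has basis $z_1,\dots,z_r$ with $\alpha z_1=\lambda z_1$ and $\alpha z_k=\lambda z_k+z_{k-1}$ for $1<k\le r$. Let $\{H,X_+,X_-\}$ be the standard basis of $\mathfrak{sl}_2$, with $H=\mathrm{diag}(1,-1)$, $[X_+,X_-]=H$, $[H,X_\epsilon]=2\epsilon X_\epsilon$. When $\mathfrak{h}$ is not nilpotent, define the regular function $f$ on $\mathrm{Hom}(\mathfrak{h},\mathfrak{sl}_2)$ by $f(\varphi)=\prod_{\lambda}(\det\varphi(u)+\lambda^2/4)$, the product over the non-zero eigenvalues $\lambda$ of $\alpha$. Then: (1) Assume $\mathfrak{h}$ is not nilpotent. A linear map $\varphi$ lies in $\mathrm{rep}(\mathfrak{h},\mathfrak{sl}_2)\setminus\mathrm{rep}^1(\mathfrak{h},\mathfrak{sl}_2)$ if and only if there exist a non-zero eigenvalue $\lambda$ of $\alpha$ and $\epsilon\in\{\pm1\}$ such that, after conjugating $\varphi$ by an element of $\mathrm{GL}_2(\mathbb{C})$: $\varphi u=\frac{\lambda}{2\epsilon}H$; $\varphi=0$ on each Jordan block $V(\lambda')$ with $\lambda'\neq\lambda$; on each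 $r$-Jordan block $V(\lambda)$, $\varphi z_k=t_kX_\epsilon$ for $1\le k\le r$ with $t_k\in\mathbb{C}$ and $t_k=0$ for $k<r$; and $t_r\neq 0$ for at least one such block $V(\lambda)$. Furthermore, in this situation $f(\varphi)=0$. (2) $\mathrm{rep}(\mathfrak{h},\mathfrak{sl}_2)=\mathrm{rep}^1(\mathfrak{h},\mathfrak{sl}_2)$ if and only if $\mathfrak{h}$ is nilpotent.
   Context: $\mathrm{rep}(\mathfrak{h},\mathfrak{sl}_2)\subseteq\mathrm{Hom}(\mathfrak{h},\mathfrak{sl}_2)$ is the variety of Lie algebra homomorphisms, and $\mathrm{rep}^1(\mathfrak{h},\mathfrak{sl}_2)=\{\varphi\in\mathrm{rep}(\mathfrak{h},\mathfrak{sl}_2):\mathrm{rank}\,\varphi\le1\}$. *)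

theory Defs
  imports "HOL-Analysis.Analysis"
begin

text \<open>The Jordan data of alpha is a list bs of blocks (lambda_j, r_j), r_j >= 1.
  V has basis z(j,k) with j < length bs and 1 <= k <= r_j; alpha z(j,1) = lambda_j z(j,1),
  alpha z(j,k) = lambda_j z(j,k) + z(j,k-1). Vectors of V are coefficient functions
  nat \<times> nat \<Rightarrow> complex vanishing outside the index set; elements of h = V + C u are pairs (v, c).\<close>

type_synonym hel = "(nat \<times> nat \<Rightarrow> complex) \<times> complex"
type_synonym mat2 = "complex ^ 2 ^ 2"

definition idx :: "(complex \<times> nat) list \<Rightarrow> (nat \<times> nat) set" where
  "idx bs = {(j, k). j < length bs \<and> 1 \<le> k \<and> k \<le> snd (bs ! j)}"

definition Vcar :: "(complex \<times> nat) list \<Rightarrow> (nat \<times> nat \<Rightarrow> complex) set" where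
  "Vcar bs = {v. \<forall>p. p \<notin> idx bs \<longrightarrow> v p = 0}"

definition hcar :: "(complex \<times> nat) list \<Rightarrow> hel set" where
  "hcar bs = {(v, c). v \<in> Vcar bs}"

definition alpha :: "(complex \<times> nat) list \<Rightarrow> (nat \<times> nat \<Rightarrow> complex) \<Rightarrow> (nat \<times> nat \<Rightarrow> complex)" where
  "alpha bs v = (\<lambda>(j, k). if (j, k) \<in> idx bs then fst (bs ! j) * v (j, k) + v (j, Suc k) else 0)"

definition hadd :: "hel \<Rightarrow> hel \<Rightarrow> hel" where
  "hadd x y = (\<lambda>p. fst x p + fst y p, snd x + snd y)"

definition hscale :: "complex \<Rightarrow> hel \<Rightarrow> hel" where
  "hscale a x = (\<lambda>p. a * fst x p, a * snd x)"

definition hzero :: hel where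
  "hzero = (\<lambda>p. 0, 0)"

definition hbr :: "(complex \<times> nat) list \<Rightarrow> hel \<Rightarrow> hel \<Rightarrow> hel" where
  "hbr bs x y = (\<lambda>p. snd x * alpha bs (fst y) p - snd y * alpha bs (fst x) p, 0)"

definition uel :: hel where
  "uel = (\<lambda>p. 0, 1)"

definition zel :: "nat \<Rightarrow> nat \<Rightarrow> hel" where
  "zel j k = (\<lambda>p. if p = (j, k) then 1 else 0, 0)"

fun brk_iter :: "(complex \<times> nat) list \<Rightarrow> hel list \<Rightarrow> hel \<Rightarrow> hel" where
  "brk_iter bs [] x = x"
| "brk_iter bs (y # ys) x = hbr bs y (brk_iter bs ys x)"

definition h_nilpotent :: "(complex \<times> nat) list \<Rightarrow> bool" where
  "h_nilpotent bs = (\<exists>n. \<forall>xs x. length xs = n \<and> set xs \<subseteq> hcar bs \<and> x \<in> hcar bs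
       \<longrightarrow> brk_iter bs xs x = hzero)"

definition is_eigenvalue :: "(complex \<times> nat) list \<Rightarrow> complex \<Rightarrow> bool" where
  "is_eigenvalue bs l = (\<exists>v \<in> Vcar bs. v \<noteq> (\<lambda>p. 0) \<and> alpha bs v = (\<lambda>p. l * v p))"

text \<open>sl_2 as traceless 2x2 complex matrices.\<close>
definition msc :: "complex \<Rightarrow> mat2 \<Rightarrow> mat2" where
  "msc c A = (\<chi> i j. c * A $ i $ j)"

definition mbr :: "mat2 \<Rightarrow> mat2 \<Rightarrow> mat2" where
  "mbr A B = A ** B - B ** A"

definition Hm :: mat2 where
  "Hm = (\<chi> i j. if i = j then (if i = 1 then 1 else -1) else 0)"

definition Xp :: mat2 where
  "Xp = (\<chi> i j. if i = 1 \<and> j = 2 then 1 else 0)"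

definition Xm :: mat2 where
  "Xm = (\<chi> i j. if i = 2 \<and> j = 1 then 1 else 0)"

definition Xe :: "int \<Rightarrow> mat2" where
  "Xe e = (if e = 1 then Xp else Xm)"

definition hom :: "(complex \<times> nat) list \<Rightarrow> (hel \<Rightarrow> mat2) \<Rightarrow> bool" where
  "hom bs \<phi> = ((\<forall>x \<in> hcar bs. \<forall>y \<in> hcar bs. \<phi> (hadd x y) = \<phi> x + \<phi> y)
     \<and> (\<forall>a. \<forall>x \<in> hcar bs. \<phi> (hscale a x) = msc a (\<phi> x))
     \<and> (\<forall>x \<in> hcar bs. trace (\<phi> x) = 0))"

definition rep :: "(complex \<times> nat) list \<Rightarrow> (hel \<Rightarrow> mat2) \<Rightarrow> bool" where
  "rep bs \<phi> = (hom bs \<phi> \<and> (\<forall>x \<in> hcar bs. \<forall>y \<in> hcar bs. \<phi> (hbr bs x y) = mbr (\<phi> x) (\<phi> y)))"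

text \<open>rank phi <= 1: the image lies in a line.\<close>
definition rep1 :: "(complex \<times> nat) list \<Rightarrow> (hel \<Rightarrow> mat2) \<Rightarrow> bool" where
  "rep1 bs \<phi> = (rep bs \<phi> \<and> (\<exists>M. \<forall>x \<in> hcar bs. \<exists>c. \<phi> x = msc c M))"

definition ffun :: "(complex \<times> nat) list \<Rightarrow> (hel \<Rightarrow> mat2) \<Rightarrow> complex" where
  "ffun bs \<phi> = (\<Prod>l \<in> {l. is_eigenvalue bs l \<and> l \<noteq> 0}. det (\<phi> uel) + l ^ 2 / 4)"

end

theory Submission
  imports Defs
begin

text \<open>
  If \<open>\<phi>\<close> is a representation of rank at least two, the image of the abelian ideal \<open>V\<close>
  consists of commuting traceless matrices, so it lies on a line \<open>\<complex>M\<close> and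
  \<open>\<phi>(v) = s(v) M\<close> for a linear form \<open>s\<close>. Bracketing with \<open>u\<close> gives
  \<open>[\<phi>(u), M] = \<mu> M\<close> with \<open>\<mu> \<noteq> 0\<close> (otherwise the rank drops to one) and
  \<open>s \<circ> \<alpha> = \<mu> s\<close>, so \<open>s\<close> is a left eigenvector of the Jordan matrix \<open>\<alpha>\<close>: it lives on
  the last basis vectors of the Jordan blocks of eigenvalue \<open>\<mu>\<close>. A \<open>2\<times>2\<close> computation
  conjugates \<open>\<phi>(u)\<close> to \<open>(\<mu>/2) H\<close> and \<open>M\<close> to a multiple of \<open>X\<^sub>+\<close>, which is the
  normal form; then \<open>det \<phi>(u) = -\<mu>\<^sup>2/4\<close> and \<open>f\<close> vanishes. Conversely every normal
  form is a representation of rank two, and one exists as soon as \<open>\<alpha>\<close> has a non-zero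
  eigenvalue, which happens exactly when iterated brackets with \<open>u\<close> do not die out,
  i.e. when \<open>h\<close> is not nilpotent.
\<close>

lemma mat2_eq_iff:
  "(A::mat2) = B \<longleftrightarrow> A$1$1 = B$1$1 \<and> A$1$2 = B$1$2 \<and> A$2$1 = B$2$1 \<and> A$2$2 = B$2$2"
  by (auto simp: vec_eq_iff forall_2)

lemma mat2_mult_nth: "((A::mat2) ** B)$i$j = A$i$1 * B$1$j + A$i$2 * B$2$j"
  by (simp add: matrix_matrix_mult_def sum_2)

lemma trace_mat2: "trace (A::mat2) = A$1$1 + A$2$2"
  by (simp add: trace_def sum_2)

lemma traceless_mat2_nth: "trace (A::mat2) = 0 \<Longrightarrow> A$2$2 = - A$1$1"
  by (simp add: trace_mat2 eq_neg_iff_add_eq_0 add.commute)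

lemma msc_nth [simp]: "msc c A $ i $ j = c * A $ i $ j"
  by (simp add: msc_def)

lemma mbr_nth: "mbr A B $ i $ j = (A ** B)$i$j - (B ** A)$i$j"
  by (simp add: mbr_def)

lemma Hm_nth: "Hm$1$1 = 1" "Hm$1$2 = 0" "Hm$2$1 = 0" "Hm$2$2 = -1"
  by (simp_all add: Hm_def)

lemma Xp_nth: "Xp$1$1 = 0" "Xp$1$2 = 1" "Xp$2$1 = 0" "Xp$2$2 = 0"
  by (simp_all add: Xp_def)

lemma Xm_nth: "Xm$1$1 = 0" "Xm$1$2 = 0" "Xm$2$1 = 1" "Xm$2$2 = 0"
  by (simp_all add: Xm_def)

lemma Xe_nonzero: "Xe e \<noteq> 0"
  by (simp add: Xe_def mat2_eq_iff Xp_nth Xm_nth)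

lemma msc_0 [simp]: "msc 0 A = 0"
  by (simp add: mat2_eq_iff)

lemma msc_1 [simp]: "msc 1 A = A"
  by (simp add: mat2_eq_iff)

lemma msc_msc: "msc a (msc b A) = msc (a * b) A"
  by (simp add: mat2_eq_iff)

lemma msc_add_left: "msc a A + msc b A = msc (a + b) A"
  by (simp add: mat2_eq_iff algebra_simps)

lemma msc_eq_0_iff: "msc a A = 0 \<longleftrightarrow> a = 0 \<or> A = 0"
  by (auto simp: mat2_eq_iff)

lemma msc_cancel: "msc a A = msc b A \<Longrightarrow> (A::mat2) \<noteq> 0 \<Longrightarrow> a = b"
  by (auto simp: mat2_eq_iff)

lemma msc_sum: "(\<Sum>p\<in>S. msc (f p) A) = msc (\<Sum>p\<in>S. f p) A"
  by (induction S rule: infinite_finite_induct) (auto simp: msc_add_left)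

lemma matrix_mult_msc_left: "msc c A ** (B::mat2) = msc c (A ** B)"
  by (simp add: mat2_eq_iff mat2_mult_nth algebra_simps)

lemma matrix_mult_msc_right: "(A::mat2) ** msc c B = msc c (A ** B)"
  by (simp add: mat2_eq_iff mat2_mult_nth algebra_simps)

lemma mbr_msc_right: "mbr A (msc c B) = msc c (mbr A B)"
  by (simp add: mat2_eq_iff mbr_nth mat2_mult_nth algebra_simps)

lemma matrix_inv_invertible:
  assumes "invertible (P::mat2)"
  shows "P ** matrix_inv P = mat 1" "matrix_inv P ** P = mat 1"
proof -
  have "\<exists>P'. P ** P' = mat 1 \<and> P' ** P = mat 1"
    using assms by (simp add: invertible_def)
  then have "P ** matrix_inv P = mat 1 \<and> matrix_inv P ** P = mat 1"
    unfolding matrix_inv_def by (rule someI_ex)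
  then show "P ** matrix_inv P = mat 1" "matrix_inv P ** P = mat 1"
    by auto
qed

lemma conj_eq_iff:
  assumes "invertible (P::mat2)"
  shows "P ** X ** matrix_inv P = Y \<longleftrightarrow> P ** X = Y ** P"
  by (metis assms matrix_inv_invertible matrix_mul_assoc matrix_mul_rid)

lemma matrix_mult_diff_distrib:
  "(A::mat2) ** (B - C) = A ** B - A ** C" "(B - C) ** (A::mat2) = B ** A - C ** A"
  by (simp_all add: mat2_eq_iff mat2_mult_nth algebra_simps)

lemma matrix_mult_add_distrib:
  "(A::mat2) ** (B + C) = A ** B + A ** C" "(B + C) ** (A::mat2) = B ** A + C ** A"
  by (simp_all add: mat2_eq_iff mat2_mult_nth algebra_simps)

lemma mbr_conj:
  assumes "Q ** P = mat 1"
  shows "mbr (P ** X ** Q) (P ** Y ** (Q::mat2)) = P ** mbr X Y ** Q"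
proof -
  have "(P ** X ** Q) ** (P ** Y ** Q) = P ** (X ** Y) ** Q" for X Y :: mat2
    by (metis assms matrix_mul_assoc matrix_mul_rid)
  then show ?thesis
    by (simp add: mbr_def matrix_mult_diff_distrib)
qed

lemma trace_conj:
  assumes "Q ** P = mat 1"
  shows "trace (P ** X ** (Q::mat2)) = trace X"
  by (metis assms matrix_mul_assoc matrix_mul_lid trace_mul_sym)

lemma det_conj:
  assumes "invertible (P::mat2)"
  shows "det (P ** X ** matrix_inv P) = det X"
proof -
  have "det P * det (matrix_inv P) = 1"
    using matrix_inv_invertible[OF assms] det_mul[of P "matrix_inv P"] by simp
  then show ?thesis
    by (simp add: det_mul algebra_simps)
qed

lemma traceless_commuting_proportional:
  fixes B C :: mat2
  assumes "trace B = 0" "trace C = 0" "B \<noteq> 0" "mbr C B = 0"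
  shows "\<exists>c. C = msc c B"
proof -
  have B22: "B$2$2 = -B$1$1" and C22: "C$2$2 = -C$1$1"
    using assms(1,2) traceless_mat2_nth by auto
  have "mbr C B $1$1 = 0" "mbr C B $1$2 = 0" "mbr C B $2$1 = 0"
    using assms(4) by simp_all
  then have e: "C$1$2 * B$2$1 = B$1$2 * C$2$1" "C$1$1 * B$1$2 = B$1$1 * C$1$2"
      "C$2$1 * B$1$1 = B$2$1 * C$1$1"
    by (simp_all add: mbr_nth mat2_mult_nth B22 C22 algebra_simps)
  consider "B$1$1 \<noteq> 0" | "B$1$1 = 0" "B$1$2 \<noteq> 0" | "B$1$1 = 0" "B$1$2 = 0" "B$2$1 \<noteq> 0"
    using assms(3) B22 by (auto simp: mat2_eq_iff)
  then show ?thesis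
  proof cases
    case 1
    then show ?thesis
      using e B22 C22 by (intro exI[of _ "C$1$1 / B$1$1"]) (simp add: mat2_eq_iff field_simps)
  next
    case 2
    then show ?thesis
      using e B22 C22 by (intro exI[of _ "C$1$2 / B$1$2"]) (simp add: mat2_eq_iff field_simps)
  next
    case 3
    then show ?thesis
      using e B22 C22 by (intro exI[of _ "C$2$1 / B$2$1"]) (simp add: mat2_eq_iff field_simps)
  qed
qed

definition mk_mat2 :: "complex \<Rightarrow> complex \<Rightarrow> complex \<Rightarrow> complex \<Rightarrow> mat2" where
  "mk_mat2 a b c d = (\<chi> i j. if i = 1 then (if j = 1 then a else b) else (if j = 1 then c else d))"

lemma mk_mat2_nth [simp]:
  "mk_mat2 a b c d $1$1 = a" "mk_mat2 a b c d $1$2 = b"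
  "mk_mat2 a b c d $2$1 = c" "mk_mat2 a b c d $2$2 = d"
  by (simp_all add: mk_mat2_def)

text \<open>The rows of \<open>P\<close> are left eigenvectors of \<open>A\<close> for \<open>\<mu>/2\<close> and \<open>-\<mu>/2\<close>,
  the second one annihilated by \<open>M\<close>.\<close>

lemma ad_eigenvector_normal_form:
  fixes A M :: mat2
  assumes "trace A = 0" "trace M = 0" "M \<noteq> 0" "mbr A M = msc \<mu> M" "\<mu> \<noteq> 0"
  shows "\<exists>P t. invertible P \<and> t \<noteq> 0 \<and> P ** A = msc (\<mu>/2) Hm ** P \<and> P ** M = msc t Xp ** P"
proof -
  obtain x y z a b c where A: "A = mk_mat2 x y z (-x)" and M: "M = mk_mat2 a b c (-a)"
    using traceless_mat2_nth[OF assms(1)] traceless_mat2_nth[OF assms(2)]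
    by (metis (no_types) mat2_eq_iff mk_mat2_nth)
  have "mbr A M $1$1 = \<mu> * M$1$1" "mbr A M $1$2 = \<mu> * M$1$2" "mbr A M $2$1 = \<mu> * M$2$1"
    using assms(4) by simp_all
  then have e1: "y * c - b * z = \<mu> * a" and e2: "2 * (x * b - y * a) = \<mu> * b"
    and e3: "2 * (z * a - x * c) = \<mu> * c"
    by (simp_all add: A M mbr_nth mat2_mult_nth algebra_simps)
  have "\<mu> * (a * a + b * c) = 0"
    using e1 e2 e3 by algebra
  then have nil: "a * a + b * c = 0"
    using assms(5) by simp
  show ?thesis
  proof (cases "c = 0")
    case True
    then have "a = 0" "b \<noteq> 0" "z = 0"
      using nil assms(3) e1 by (auto simp: M mat2_eq_iff)
    moreover have "2 * x = \<mu>"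
      using e2 calculation by simp
    ultimately show ?thesis
      using True assms(5)
      by (intro exI[of _ "mk_mat2 \<mu> y 0 \<mu>"] exI[of _ b])
        (simp add: A M invertible_det_nz det_2 mat2_eq_iff mat2_mult_nth Hm_nth Xp_nth field_simps)
  next
    case False
    have "c * (\<mu> * a + 2 * x * a + 2 * b * z) = 0"
      using e3 nil by algebra
    then have e4: "\<mu> * a + 2 * x * a + 2 * b * z = 0"
      using False by simp
    show ?thesis
      using False assms(5) e1 e2 e3 e4 nil
      by (intro exI[of _ "mk_mat2 (c * z) (c * \<mu> - a * z) c (-a)"] exI[of _ "c * \<mu>"])
        (simp add: A M invertible_det_nz det_2 mat2_eq_iff mat2_mult_nth Hm_nth Xp_nth field_simps,
          algebra)
  qed
qed

lemma hcar_iff [simp]: "(v, c) \<in> hcar bs \<longleftrightarrow> v \<in> Vcar bs"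
  by (simp add: hcar_def)

lemma uel_hcar [simp]: "uel \<in> hcar bs"
  by (simp add: uel_def Vcar_def)

lemma zel_hcar: "(j, k) \<in> idx bs \<Longrightarrow> zel j k \<in> hcar bs"
  by (auto simp: zel_def Vcar_def)

lemma fst_zel_Vcar: "(j, k) \<in> idx bs \<Longrightarrow> fst (zel j k) \<in> Vcar bs"
  by (auto simp: zel_def Vcar_def)

lemma finite_idx: "finite (idx bs)"
proof (rule finite_subset)
  show "idx bs \<subseteq> {..<length bs} \<times> {..sum_list (map snd bs)}"
  proof (clarsimp simp: idx_def)
    fix j k assume "j < length bs" "k \<le> snd (bs ! j)"
    moreover have "snd (bs ! j) \<le> sum_list (map snd bs)"
      using \<open>j < length bs\<close> by (intro member_le_sum_list) auto
    ultimately show "k \<le> sum_list (map snd bs)"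
      by linarith
  qed
qed simp

lemma hom_add: "hom bs \<phi> \<Longrightarrow> x \<in> hcar bs \<Longrightarrow> y \<in> hcar bs \<Longrightarrow> \<phi> (hadd x y) = \<phi> x + \<phi> y"
  by (simp add: hom_def)

lemma hom_scale: "hom bs \<phi> \<Longrightarrow> x \<in> hcar bs \<Longrightarrow> \<phi> (hscale a x) = msc a (\<phi> x)"
  by (simp add: hom_def)

lemma hom_trace: "hom bs \<phi> \<Longrightarrow> x \<in> hcar bs \<Longrightarrow> trace (\<phi> x) = 0"
  by (simp add: hom_def)

lemma hom_V_zero: "hom bs \<phi> \<Longrightarrow> \<phi> (\<lambda>p. 0, 0) = 0"
  using hom_scale[of bs \<phi> uel 0] by (simp add: hscale_def uel_def Vcar_def)

lemma hom_split:
  assumes "hom bs \<phi>" "v \<in> Vcar bs"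
  shows "\<phi> (v, c) = \<phi> (v, 0) + msc c (\<phi> uel)"
proof -
  have "(v, c) = hadd (v, 0) (hscale c uel)"
    by (simp add: hadd_def hscale_def uel_def)
  moreover have "hscale c uel \<in> hcar bs"
    by (simp add: hscale_def uel_def Vcar_def)
  ultimately show ?thesis
    using assms by (metis hcar_iff hom_add hom_scale uel_hcar)
qed

lemma hom_V_expansion:
  assumes "hom bs \<phi>" "v \<in> Vcar bs"
  shows "\<phi> (v, 0) = (\<Sum>p\<in>idx bs. msc (v p) (\<phi> (zel (fst p) (snd p))))"
proof -
  have expansion: "\<phi> (\<lambda>q. if q \<in> S then v q else 0, 0) = (\<Sum>p\<in>S. msc (v p) (\<phi> (zel (fst p) (snd p))))"
    if "S \<subseteq> idx bs" for S
    using finite_subset[OF that finite_idx] that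
  proof (induction S rule: finite_induct)
    case empty
    then show ?case
      using hom_V_zero[OF assms(1)] by simp
  next
    case (insert p S)
    obtain j k where p: "p = (j, k)" and jk: "(j, k) \<in> idx bs"
      using insert.prems by (cases p) auto
    have "(\<lambda>q. if q \<in> insert p S then v q else 0, 0::complex)
        = hadd (hscale (v p) (zel j k)) (\<lambda>q. if q \<in> S then v q else 0, 0)"
      using insert.hyps(2) p by (auto simp: hadd_def hscale_def zel_def fun_eq_iff)
    moreover have "(\<lambda>q. if q \<in> S then v q else 0) \<in> Vcar bs"
      using insert.prems by (auto simp: Vcar_def)
    moreover have "hscale (v p) (zel j k) \<in> hcar bs"
      using jk by (auto simp: hscale_def zel_def Vcar_def)
    ultimately show ?case
      using insert assms(1) p zel_hcar[OF jk] by (simp add: hom_add hom_scale)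
  qed
  have "(\<lambda>q. if q \<in> idx bs then v q else 0) = v"
    using assms(2) by (auto simp: Vcar_def)
  then show ?thesis
    using expansion[OF order_refl] by simp
qed

lemma alpha_Vcar: "alpha bs v \<in> Vcar bs"
  by (simp add: Vcar_def alpha_def split_beta)

lemma alpha_linear:
  "alpha bs (\<lambda>p. a * v p + b * w p) = (\<lambda>p. a * alpha bs v p + b * alpha bs w p)"
  by (simp add: alpha_def fun_eq_iff split_beta algebra_simps)

lemma alpha_zero [simp]: "alpha bs (\<lambda>p. 0) = (\<lambda>p. 0)"
  by (simp add: alpha_def fun_eq_iff split_beta)

lemma alpha_scale: "alpha bs (\<lambda>p. a * v p) = (\<lambda>p. a * alpha bs v p)"
  using alpha_linear[of bs a v 0 v] by simp

lemma hbr_pair: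
  "hbr bs (v, c) (w, d) = (alpha bs (\<lambda>p. c * w p - d * v p), 0)"
  using alpha_linear[of bs c w "-d" v] by (simp add: hbr_def)

lemma alpha_zel:
  assumes "(j, k) \<in> idx bs"
  shows "alpha bs (fst (zel j k))
    = (\<lambda>p. fst (bs!j) * fst (zel j k) p + (if 2 \<le> k then fst (zel j (k - 1)) p else 0))"
proof
  fix p :: "nat \<times> nat"
  show "alpha bs (fst (zel j k)) p
    = fst (bs!j) * fst (zel j k) p + (if 2 \<le> k then fst (zel j (k - 1)) p else 0)"
    using assms by (cases p) (auto simp: alpha_def zel_def idx_def)
qed

definition covec :: "(complex \<times> nat) list \<Rightarrow> (nat \<times> nat \<Rightarrow> complex) \<Rightarrow> (nat \<times> nat \<Rightarrow> complex) \<Rightarrow> complex"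
  where "covec bs s v = (\<Sum>p\<in>idx bs. v p * s p)"

definition top_supported :: "(complex \<times> nat) list \<Rightarrow> complex \<Rightarrow> (nat \<times> nat \<Rightarrow> complex) \<Rightarrow> bool"
  where "top_supported bs l s \<longleftrightarrow>
    (\<forall>j k. (j, k) \<in> idx bs \<longrightarrow> s (j, k) \<noteq> 0 \<longrightarrow> fst (bs ! j) = l \<and> k = snd (bs ! j))"

lemma covec_zel: "(j, k) \<in> idx bs \<Longrightarrow> covec bs s (fst (zel j k)) = s (j, k)"
  by (simp add: covec_def zel_def if_distrib[of "\<lambda>x. x * _"] sum.delta finite_idx cong: if_cong)

lemma covec_linear:
  "covec bs s (\<lambda>p. a * v p + b * w p) = a * covec bs s v + b * covec bs s w"
  by (simp add: covec_def sum.distrib sum_distrib_left algebra_simps)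

lemma covec_nonzero:
  assumes "covec bs s v \<noteq> 0"
  shows "\<exists>p\<in>idx bs. s p \<noteq> 0"
proof -
  obtain p where "p \<in> idx bs" "v p * s p \<noteq> 0"
    using assms unfolding covec_def by (rule sum.not_neutral_contains_not_neutral)
  then show ?thesis
    by auto
qed

lemma covec_alpha_zel:
  assumes "(j, k) \<in> idx bs"
  shows "covec bs s (alpha bs (fst (zel j k)))
    = fst (bs ! j) * s (j, k) + (if 2 \<le> k then s (j, k - 1) else 0)"
proof (cases "2 \<le> k")
  case True
  then have "(j, k - 1) \<in> idx bs"
    using assms by (auto simp: idx_def)
  then show ?thesis
    using True covec_linear[of bs s "fst (bs ! j)" "fst (zel j k)" 1 "fst (zel j (k - 1))"]
    by (simp add: alpha_zel[OF assms] covec_zel[OF assms] covec_zel)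
next
  case False
  then show ?thesis
    using covec_linear[of bs s "fst (bs ! j)" "fst (zel j k)" 0 "fst (zel j k)"]
    by (simp add: alpha_zel[OF assms] covec_zel[OF assms])
qed

lemma covec_alpha_eq_iff:
  "(\<forall>v\<in>Vcar bs. covec bs s (alpha bs v) = l * covec bs s v) \<longleftrightarrow> top_supported bs l s"
proof
  assume eigen: "\<forall>v\<in>Vcar bs. covec bs s (alpha bs v) = l * covec bs s v"
  have rel: "(l - fst (bs ! j)) * s (j, k) = (if 2 \<le> k then s (j, k - 1) else 0)"
    if "(j, k) \<in> idx bs" for j k
    using eigen fst_zel_Vcar[OF that] covec_alpha_zel[OF that] covec_zel[OF that]
    by (auto simp: algebra_simps)
  have other_block: "s (j, k) = 0" if "(j, k) \<in> idx bs" "fst (bs ! j) \<noteq> l" for j k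
    using that
  proof (induction k)
    case (Suc k)
    then have "(l - fst (bs ! j)) * s (j, Suc k) = 0"
      using rel[OF Suc.prems(1)] by (cases k) (auto simp: idx_def)
    then show ?case
      using Suc.prems(2) by simp
  qed (simp add: idx_def)
  show "top_supported bs l s"
    unfolding top_supported_def
  proof (intro allI impI conjI)
    fix j k assume jk: "(j, k) \<in> idx bs" "s (j, k) \<noteq> 0"
    then show l: "fst (bs ! j) = l"
      using other_block by blast
    show "k = snd (bs ! j)"
    proof (rule ccontr)
      assume "k \<noteq> snd (bs ! j)"
      then have "(j, Suc k) \<in> idx bs"
        using jk(1) by (auto simp: idx_def)
      then show False
        using rel[of j "Suc k"] l jk by (auto simp: idx_def)
    qed
  qed
next
  assume top: "top_supported bs l s"
  show "\<forall>v\<in>Vcar bs. covec bs s (alpha bs v) = l * covec bs s v"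
  proof
    fix v assume v: "v \<in> Vcar bs"
    have "alpha bs v p * s p = l * (v p * s p)" if "p \<in> idx bs" for p
    proof (cases "s p = 0")
      case False
      obtain j k where p: "p = (j, k)"
        by (cases p)
      with top False that have "fst (bs ! j) = l" "k = snd (bs ! j)"
        by (auto simp: top_supported_def)
      moreover have "v (j, Suc k) = 0"
        using v calculation by (auto simp: Vcar_def idx_def)
      ultimately show ?thesis
        using that p by (simp add: alpha_def)
    qed simp
    then have "(\<Sum>p\<in>idx bs. alpha bs v p * s p) = (\<Sum>p\<in>idx bs. l * (v p * s p))"
      by (rule sum.cong[OF refl])
    then show "covec bs s (alpha bs v) = l * covec bs s v"
      by (simp add: covec_def sum_distrib_left)
  qed
qed

lemma is_eigenvalue_block:
  assumes "j < length bs" "1 \<le> snd (bs ! j)"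
  shows "is_eigenvalue bs (fst (bs ! j))"
proof -
  have "(j, 1) \<in> idx bs"
    using assms by (simp add: idx_def)
  moreover have "fst (zel j 1) \<noteq> (\<lambda>p. 0)"
    by (auto simp: zel_def fun_eq_iff)
  ultimately show ?thesis
    unfolding is_eigenvalue_def using fst_zel_Vcar alpha_zel by fastforce
qed

text \<open>At the last non-zero coordinate \<open>K\<close> of an eigenvector \<open>v\<close> in some block \<open>j\<close>, the
  relation \<open>\<alpha> v = l v\<close> reads \<open>\<lambda>\<^sub>j v(j,K) = l v(j,K)\<close>.\<close>

lemma is_eigenvalue_imp_block:
  assumes "is_eigenvalue bs l"
  shows "\<exists>j<length bs. fst (bs ! j) = l"
proof -
  obtain v where v: "v \<in> Vcar bs" "v \<noteq> (\<lambda>p. 0)" "alpha bs v = (\<lambda>p. l * v p)"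
    using assms by (auto simp: is_eigenvalue_def)
  then obtain j k where "v (j, k) \<noteq> 0"
    by (metis ext surj_pair)
  moreover have "k' \<le> snd (bs ! j)" if "v (j, k') \<noteq> 0" for k'
    using v(1) that by (auto simp: Vcar_def idx_def)
  ultimately obtain K where K: "v (j, K) \<noteq> 0" "\<And>k'. v (j, k') \<noteq> 0 \<Longrightarrow> k' \<le> K"
    using Nat.ex_has_greatest_nat[of "\<lambda>k. v (j, k) \<noteq> 0"] by metis
  have "(j, K) \<in> idx bs"
    using v(1) K(1) by (auto simp: Vcar_def)
  moreover have "v (j, Suc K) = 0"
    using K(2) by force
  ultimately have "fst (bs ! j) * v (j, K) = l * v (j, K)"
    using fun_cong[OF v(3), of "(j, K)"] by (simp add: alpha_def)
  then show ?thesis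
    using K(1) \<open>(j, K) \<in> idx bs\<close> by (auto simp: idx_def)
qed

lemma brk_iter_replicate_uel:
  assumes "(j, 1) \<in> idx bs"
  shows "brk_iter bs (replicate n uel) (zel j 1) = (\<lambda>p. fst (bs ! j) ^ n * fst (zel j 1) p, 0)"
proof (induction n)
  case 0
  then show ?case
    by (simp add: zel_def)
next
  case (Suc n)
  have "alpha bs (fst (zel j 1)) = (\<lambda>p. fst (bs ! j) * fst (zel j 1) p)"
    using alpha_zel[OF assms] by simp
  then show ?case
    using Suc by (simp add: uel_def hbr_pair alpha_scale mult_ac)
qed

lemma not_h_nilpotent_if_nonzero_eigenvalue:
  assumes "j < length bs" "1 \<le> snd (bs ! j)" "fst (bs ! j) \<noteq> 0"
  shows "\<not> h_nilpotent bs"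
proof
  assume "h_nilpotent bs"
  then obtain n where n: "\<And>xs x. length xs = n \<and> set xs \<subseteq> hcar bs \<and> x \<in> hcar bs
      \<Longrightarrow> brk_iter bs xs x = hzero"
    unfolding h_nilpotent_def by blast
  have j1: "(j, 1) \<in> idx bs"
    using assms by (simp add: idx_def)
  then have "brk_iter bs (replicate n uel) (zel j 1) = hzero"
    using n[of "replicate n uel" "zel j 1"] zel_hcar[OF j1] by (simp add: set_replicate_conv_if)
  then have "(\<lambda>p. fst (bs ! j) ^ n * fst (zel j 1) p, 0) = hzero"
    by (simp only: brk_iter_replicate_uel[OF j1])
  then have "fst (bs ! j) ^ n * fst (zel j 1) (j, 1) = 0"
    by (auto simp: hzero_def fun_eq_iff)
  then show False
    using assms(3) by (simp add: zel_def)
qed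

lemma funpow_alpha_zero_eigenvalues:
  assumes "\<forall>j<length bs. fst (bs ! j) = 0" "v \<in> Vcar bs"
  shows "(alpha bs ^^ n) v (a, b) = (if (a, b) \<in> idx bs then v (a, b + n) else 0)"
proof (induction n arbitrary: a b)
  case 0
  then show ?case
    using assms(2) by (auto simp: Vcar_def)
next
  case (Suc n)
  show ?case
  proof (cases "(a, Suc b) \<in> idx bs")
    case False
    then have "(a, b + Suc n) \<notin> idx bs"
      by (auto simp: idx_def)
    then show ?thesis
      using Suc False assms by (auto simp: alpha_def Vcar_def idx_def)
  qed (use Suc assms in \<open>auto simp: alpha_def idx_def\<close>)
qed

lemma funpow_alpha_scale: "(alpha bs ^^ n) (\<lambda>p. c * w p) = (\<lambda>p. c * (alpha bs ^^ n) w p)"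
  by (induction n) (simp_all add: alpha_scale)

lemma brk_iter_eq_funpow_alpha:
  assumes "set ys \<subseteq> hcar bs" "u \<in> Vcar bs"
  shows "\<exists>w\<in>Vcar bs. brk_iter bs ys (u, d) = ((alpha bs ^^ length ys) w, if ys = [] then d else 0)"
  using assms(1)
proof (induction ys)
  case Nil
  then show ?case
    using assms(2) by auto
next
  case (Cons y ys)
  then obtain w where w: "w \<in> Vcar bs"
    "brk_iter bs ys (u, d) = ((alpha bs ^^ length ys) w, if ys = [] then d else 0)"
    by auto
  obtain v c where y: "y = (v, c)" "v \<in> Vcar bs"
    using Cons.prems by (cases y) auto
  show ?case
  proof (cases "ys = []")
    case True
    then show ?thesis
      using w y by (intro bexI[of _ "\<lambda>p. c * w p - d * v p"]) (auto simp: hbr_pair Vcar_def)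
  next
    case False
    then show ?thesis
      using w y
      by (intro bexI[of _ "\<lambda>p. c * w p"])
        (auto simp: hbr_pair Vcar_def funpow_alpha_scale funpow_swap1[of "alpha bs"])
  qed
qed

lemma h_nilpotent_if_zero_eigenvalues:
  assumes "\<forall>j<length bs. fst (bs ! j) = 0"
  shows "h_nilpotent bs"
  unfolding h_nilpotent_def
proof (intro exI allI impI)
  define n where "n = Suc (sum_list (map snd bs))"
  fix xs x assume xs: "length xs = n \<and> set xs \<subseteq> hcar bs \<and> x \<in> hcar bs"
  obtain u d where x: "x = (u, d)" "u \<in> Vcar bs"
    using xs by (cases x) auto
  have "xs \<noteq> []"
    using xs by (auto simp: n_def)
  then obtain w where w: "w \<in> Vcar bs" "brk_iter bs xs x = ((alpha bs ^^ n) w, 0)"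
    using brk_iter_eq_funpow_alpha[of xs bs u d] xs x by auto
  have "(a, b + n) \<notin> idx bs" for a b
  proof
    assume "(a, b + n) \<in> idx bs"
    moreover have "snd (bs ! a) \<le> sum_list (map snd bs)" if "a < length bs"
      using that by (intro member_le_sum_list) auto
    ultimately show False
      by (auto simp: idx_def n_def)
  qed
  then have "(alpha bs ^^ n) w = (\<lambda>p. 0)"
    using funpow_alpha_zero_eigenvalues[OF assms w(1)] w(1) by (auto simp: Vcar_def fun_eq_iff)
  then show "brk_iter bs xs x = hzero"
    using w(2) by (simp add: hzero_def)
qed

lemma h_nilpotent_iff:
  assumes "\<forall>b \<in> set bs. 1 \<le> snd b"
  shows "h_nilpotent bs \<longleftrightarrow> (\<forall>j<length bs. fst (bs ! j) = 0)"
  using assms h_nilpotent_if_zero_eigenvalues not_h_nilpotent_if_nonzero_eigenvalue by fastforce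

lemma rep_hom: "rep bs \<phi> \<Longrightarrow> hom bs \<phi>"
  by (simp add: rep_def)

lemma rep_bracket: "rep bs \<phi> \<Longrightarrow> x \<in> hcar bs \<Longrightarrow> y \<in> hcar bs \<Longrightarrow> \<phi> (hbr bs x y) = mbr (\<phi> x) (\<phi> y)"
  by (simp add: rep_def)

lemma rep_uel_bracket: "rep bs \<phi> \<Longrightarrow> v \<in> Vcar bs \<Longrightarrow> \<phi> (alpha bs v, 0) = mbr (\<phi> uel) (\<phi> (v, 0))"
  using rep_bracket[of bs \<phi> uel "(v, 0)"] by (simp add: uel_def hbr_pair Vcar_def)

lemma rep1_if_line:
  assumes "rep bs \<phi>" "\<forall>v\<in>Vcar bs. \<exists>a. \<phi> (v, 0) = msc a M" "\<phi> uel = msc c M"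
  shows "rep1 bs \<phi>"
  unfolding rep1_def
proof (intro conjI exI[of _ M] ballI)
  show "rep bs \<phi>"
    by (fact assms(1))
  fix x assume "x \<in> hcar bs"
  then obtain v d where x: "x = (v, d)" "v \<in> Vcar bs"
    by (cases x) auto
  then obtain a where "\<phi> (v, 0) = msc a M"
    using assms(2) by blast
  then have "\<phi> x = msc (a + d * c) M"
    using hom_split[of bs \<phi> v d] assms(1,3) x by (simp add: rep_def msc_msc msc_add_left)
  then show "\<exists>a. \<phi> x = msc a M" ..
qed

lemma rep_V_proportional:
  assumes "rep bs \<phi>" "v0 \<in> Vcar bs" "\<phi> (v0, 0) \<noteq> 0"
  shows "\<exists>s. \<forall>v\<in>Vcar bs. \<phi> (v, 0) = msc (covec bs s v) (\<phi> (v0, 0))"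
proof -
  define M where "M = \<phi> (v0, 0)"
  have hom: "hom bs \<phi>"
    using assms(1) by (rule rep_hom)
  have "\<exists>c. \<phi> (zel (fst p) (snd p)) = msc c M" if "p \<in> idx bs" for p
  proof (rule traceless_commuting_proportional)
    have "zel (fst p) (snd p) \<in> hcar bs"
      using that zel_hcar by (cases p) auto
    moreover have "hbr bs (zel (fst p) (snd p)) (v0, 0) = (\<lambda>p. 0, 0)"
      by (simp add: zel_def hbr_pair)
    ultimately show "mbr (\<phi> (zel (fst p) (snd p))) M = 0"
      using rep_bracket[OF assms(1)] hom_V_zero[OF hom] assms(2) by (metis M_def hcar_iff)
    show "trace M = 0" "trace (\<phi> (zel (fst p) (snd p))) = 0"
      using hom_trace[OF hom] \<open>zel (fst p) (snd p) \<in> hcar bs\<close> assms(2) by (auto simp: M_def)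
  qed (use assms(3) M_def in simp)
  then obtain s where s: "\<forall>p\<in>idx bs. \<phi> (zel (fst p) (snd p)) = msc (s p) M"
    by metis
  have "\<phi> (v, 0) = msc (covec bs s v) M" if "v \<in> Vcar bs" for v
    using hom_V_expansion[OF hom that] s
    by (simp add: covec_def msc_msc msc_sum[symmetric] cong: sum.cong)
  then show ?thesis
    by (auto simp: M_def)
qed

lemma rep_not_rep1_V_nonzero:
  assumes "rep bs \<phi>" "\<not> rep1 bs \<phi>"
  shows "\<exists>v\<in>Vcar bs. \<phi> (v, 0) \<noteq> 0"
proof (rule ccontr)
  assume "\<not> (\<exists>v\<in>Vcar bs. \<phi> (v, 0) \<noteq> 0)"
  then have "\<forall>v\<in>Vcar bs. \<exists>a. \<phi> (v, 0) = msc a (\<phi> uel)"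
    by (metis msc_0)
  moreover have "\<phi> uel = msc 1 (\<phi> uel)"
    by simp
  ultimately show False
    using rep1_if_line[OF assms(1)] assms(2) by blast
qed

lemma rep_not_rep1_ad_eigenvector:
  assumes rep: "rep bs \<phi>" and not_rep1: "\<not> rep1 bs \<phi>"
  obtains M s \<mu> where "M \<noteq> 0" "trace M = 0" "\<mu> \<noteq> 0" "mbr (\<phi> uel) M = msc \<mu> M"
    "\<forall>v\<in>Vcar bs. \<phi> (v, 0) = msc (covec bs s v) M"
    "top_supported bs \<mu> s" "\<exists>p\<in>idx bs. s p \<noteq> 0"
proof -
  have hom: "hom bs \<phi>"
    using rep by (rule rep_hom)
  define A where "A = \<phi> uel"
  obtain v0 where v0: "v0 \<in> Vcar bs" "\<phi> (v0, 0) \<noteq> 0"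
    using rep_not_rep1_V_nonzero[OF rep not_rep1] by blast
  define M where "M = \<phi> (v0, 0)"
  obtain s where s: "\<forall>v\<in>Vcar bs. \<phi> (v, 0) = msc (covec bs s v) M"
    using rep_V_proportional[OF rep v0] by (auto simp: M_def)
  have M: "M \<noteq> 0" "trace M = 0"
    using v0 hom_trace[OF hom] by (auto simp: M_def)
  have "msc 1 M = msc (covec bs s v0) M"
    using bspec[OF s v0(1)] by (simp add: M_def[symmetric])
  then have s_v0: "covec bs s v0 = 1"
    using msc_cancel M(1) by metis
  define \<mu> where "\<mu> = covec bs s (alpha bs v0)"
  have ad: "mbr A M = msc \<mu> M"
    using rep_uel_bracket[OF rep v0(1)] s alpha_Vcar by (simp add: A_def M_def[symmetric] \<mu>_def)
  have "covec bs s (alpha bs v) = \<mu> * covec bs s v" if "v \<in> Vcar bs" for v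
  proof -
    have "msc (covec bs s (alpha bs v)) M = msc (\<mu> * covec bs s v) M"
      using rep_uel_bracket[OF rep that] s that alpha_Vcar ad
      by (simp add: A_def mbr_msc_right msc_msc mult.commute)
    then show ?thesis
      using msc_cancel M(1) by blast
  qed
  then have top: "top_supported bs \<mu> s"
    using covec_alpha_eq_iff by blast
  have \<mu>: "\<mu> \<noteq> 0"
  proof
    assume "\<mu> = 0"
    then obtain c where "A = msc c M"
      using traceless_commuting_proportional[OF M(2) _ M(1)] ad hom_trace[OF hom uel_hcar]
      by (auto simp: A_def)
    then show False
      using rep1_if_line[OF rep, of M c] s not_rep1 by (auto simp: A_def)
  qed
  have nonzero: "\<exists>p\<in>idx bs. s p \<noteq> 0"
    using covec_nonzero[of bs s v0] s_v0 by simp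
  show thesis
    using ad by (intro that[OF M \<mu> _ s top nonzero]) (simp add: A_def)
qed

text \<open>The normal form of the theorem, with the coefficients \<open>t\<^sub>k\<close> of all Jordan blocks
  collected into one function \<open>s\<close> on the basis.\<close>

definition sl2_normal_form :: "(complex \<times> nat) list \<Rightarrow> (hel \<Rightarrow> mat2) \<Rightarrow> complex \<Rightarrow> int \<Rightarrow> bool"
  where "sl2_normal_form bs \<psi> l e \<longleftrightarrow> \<psi> uel = msc (l / (2 * of_int e)) Hm \<and>
    (\<exists>s. top_supported bs l s \<and> (\<exists>p\<in>idx bs. s p \<noteq> 0) \<and>
       (\<forall>j k. (j, k) \<in> idx bs \<longrightarrow> \<psi> (zel j k) = msc (s (j, k)) (Xe e)))"

lemma rep_not_rep1_normal_form:
  assumes "rep bs \<phi>" "\<not> rep1 bs \<phi>"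
  shows "\<exists>l P. l \<noteq> 0 \<and> invertible P \<and> sl2_normal_form bs (\<lambda>x. P ** \<phi> x ** matrix_inv P) l 1"
proof -
  obtain M s \<mu> where M: "M \<noteq> 0" "trace M = 0" and \<mu>: "\<mu> \<noteq> 0" "mbr (\<phi> uel) M = msc \<mu> M"
    and s: "\<forall>v\<in>Vcar bs. \<phi> (v, 0) = msc (covec bs s v) M" "top_supported bs \<mu> s"
      "\<exists>p\<in>idx bs. s p \<noteq> 0"
    by (rule rep_not_rep1_ad_eigenvector[OF assms])
  have "trace (\<phi> uel) = 0"
    by (rule hom_trace[OF rep_hom[OF assms(1)] uel_hcar])
  then obtain P t where P: "invertible P" "t \<noteq> 0" "P ** \<phi> uel = msc (\<mu> / 2) Hm ** P"
      "P ** M = msc t Xp ** P"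
    using ad_eigenvector_normal_form[OF _ M(2,1) \<mu>(2,1)] by blast
  have "P ** \<phi> (zel j k) = msc (s (j, k) * t) Xp ** P" if "(j, k) \<in> idx bs" for j k
  proof -
    have "\<phi> (zel j k) = \<phi> (fst (zel j k), 0)"
      by (simp add: zel_def)
    also have "\<dots> = msc (s (j, k)) M"
      using bspec[OF s(1) fst_zel_Vcar[OF that]] by (simp add: covec_zel[OF that])
    finally show ?thesis
      using P(4) by (simp add: matrix_mult_msc_left matrix_mult_msc_right msc_msc)
  qed
  moreover have "top_supported bs \<mu> (\<lambda>p. s p * t)"
    using s(2) by (simp add: top_supported_def)
  moreover have "\<exists>p\<in>idx bs. s p * t \<noteq> 0"
    using s(3) P(2) by simp
  ultimately have "sl2_normal_form bs (\<lambda>x. P ** \<phi> x ** matrix_inv P) \<mu> 1"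
    unfolding sl2_normal_form_def conj_eq_iff[OF P(1)] Xe_def
    using P(3) by (intro conjI exI[of _ "\<lambda>p. s p * t"]) simp_all
  then show ?thesis
    using \<mu>(1) P(1) by blast
qed

lemma mbr_sl2_normal_form:
  assumes "e \<in> {1, -1}"
  shows "mbr (msc a (Xe e) + msc c (msc (l / (2 * of_int e)) Hm))
      (msc b (Xe e) + msc d (msc (l / (2 * of_int e)) Hm)) = msc (l * (c * b - d * a)) (Xe e)"
  using assms
  by (auto simp: mat2_eq_iff Xe_def mbr_nth mat2_mult_nth Hm_nth Xp_nth Xm_nth field_simps)

lemma Hm_Xe_not_collinear:
  assumes "msc a N = msc k Hm" "k \<noteq> 0" "msc b N = msc t (Xe e)" "t \<noteq> 0"
  shows False
proof -
  have "N$1$2 = 0" "N$2$1 = 0"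
    using assms(1,2) by (auto simp: mat2_eq_iff Hm_nth)
  then show False
    using assms(3,4) by (cases "e = 1") (auto simp: mat2_eq_iff Xe_def Xp_nth Xm_nth)
qed

lemma sl2_normal_form_rep:
  assumes hom: "hom bs \<psi>" and e: "e \<in> {1, -1}" and "l \<noteq> 0" and "sl2_normal_form bs \<psi> l e"
  shows "rep bs \<psi> \<and> \<not> rep1 bs \<psi>"
proof -
  define X U where "X = Xe e" and "U = msc (l / (2 * of_int e)) Hm"
  obtain s where u: "\<psi> uel = U" and s: "top_supported bs l s" "\<exists>p\<in>idx bs. s p \<noteq> 0"
      "\<forall>j k. (j, k) \<in> idx bs \<longrightarrow> \<psi> (zel j k) = msc (s (j, k)) X"
    using assms(4) by (auto simp: sl2_normal_form_def X_def U_def)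
  have \<psi>: "\<psi> (v, c) = msc (covec bs s v) X + msc c U" if "v \<in> Vcar bs" for v c
  proof -
    have "\<psi> (zel (fst p) (snd p)) = msc (s p) X" if "p \<in> idx bs" for p
      using s(3) that by (cases p) auto
    then have "\<psi> (v, 0) = (\<Sum>p\<in>idx bs. msc (v p * s p) X)"
      using hom_V_expansion[OF hom that] by (simp add: msc_msc cong: sum.cong)
    then show ?thesis
      using hom_split[OF hom that, of c] u by (simp add: msc_sum covec_def)
  qed
  have eigen: "\<forall>v\<in>Vcar bs. covec bs s (alpha bs v) = l * covec bs s v"
    using s(1) covec_alpha_eq_iff by blast
  have "\<psi> (hbr bs x y) = mbr (\<psi> x) (\<psi> y)" if xy_hcar: "x \<in> hcar bs" "y \<in> hcar bs" for x y
  proof -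
    obtain v c w d where xy: "x = (v, c)" "y = (w, d)" "v \<in> Vcar bs" "w \<in> Vcar bs"
      using xy_hcar by (cases x, cases y) auto
    have "covec bs s (alpha bs (\<lambda>p. c * w p - d * v p)) = l * (c * covec bs s w - d * covec bs s v)"
      using eigen covec_linear[of bs s c w "-d" v] xy(3,4) by (simp add: Vcar_def)
    then show ?thesis
      using \<psi> xy alpha_Vcar e by (simp add: hbr_pair mbr_sl2_normal_form X_def U_def)
  qed
  then have rep: "rep bs \<psi>"
    using hom by (simp add: rep_def)
  have "\<not> rep1 bs \<psi>"
  proof
    assume "rep1 bs \<psi>"
    then obtain N where N: "\<forall>x\<in>hcar bs. \<exists>c. \<psi> x = msc c N"
      by (auto simp: rep1_def)
    obtain j k where jk: "(j, k) \<in> idx bs" "s (j, k) \<noteq> 0"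
      using s(2) by auto
    obtain a b where "msc a N = U" "msc b N = msc (s (j, k)) X"
      using N u s(3) jk(1) zel_hcar[OF jk(1)] uel_hcar by metis
    moreover have "l / (2 * of_int e) \<noteq> 0"
      using \<open>l \<noteq> 0\<close> e by auto
    ultimately show False
      using Hm_Xe_not_collinear jk(2) unfolding U_def X_def by blast
  qed
  with rep show ?thesis ..
qed

lemma hom_conj:
  assumes "Q ** P = mat 1" "hom bs \<phi>"
  shows "hom bs (\<lambda>x. P ** \<phi> x ** Q)"
  using assms(2) trace_conj[OF assms(1)]
  by (simp add: hom_def matrix_mult_add_distrib matrix_mult_msc_left matrix_mult_msc_right)

lemma rep_conj:
  assumes "Q ** P = mat 1" "rep bs \<phi>"
  shows "rep bs (\<lambda>x. P ** \<phi> x ** Q)"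
  using assms hom_conj[OF assms(1)] by (simp add: rep_def mbr_conj)

lemma rep1_conj:
  assumes "Q ** P = mat 1" "rep1 bs \<phi>"
  shows "rep1 bs (\<lambda>x. P ** \<phi> x ** Q)"
proof -
  obtain M where "\<forall>x\<in>hcar bs. \<exists>c. \<phi> x = msc c M"
    using assms(2) by (auto simp: rep1_def)
  then have "\<forall>x\<in>hcar bs. \<exists>c. P ** \<phi> x ** Q = msc c (P ** M ** Q)"
    by (metis matrix_mult_msc_left matrix_mult_msc_right)
  then show ?thesis
    using rep_conj[OF assms(1)] assms(2) by (auto simp: rep1_def)
qed

lemma rep_not_rep1_conj_iff:
  assumes "invertible P"
  shows "rep bs (\<lambda>x. P ** \<phi> x ** matrix_inv P) \<and> \<not> rep1 bs (\<lambda>x. P ** \<phi> x ** matrix_inv P)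
    \<longleftrightarrow> rep bs \<phi> \<and> \<not> rep1 bs \<phi>"
proof -
  note inv = matrix_inv_invertible[OF assms]
  define \<psi> where "\<psi> = (\<lambda>x. P ** \<phi> x ** matrix_inv P)"
  have "matrix_inv P ** (P ** X ** matrix_inv P) ** P = (matrix_inv P ** P) ** X ** (matrix_inv P ** P)"
    for X :: mat2
    by (simp only: matrix_mul_assoc)
  then have "(\<lambda>x. matrix_inv P ** \<psi> x ** P) = \<phi>"
    by (simp add: inv \<psi>_def)
  then have "rep bs \<psi> \<Longrightarrow> rep bs \<phi>" "rep1 bs \<psi> \<Longrightarrow> rep1 bs \<phi>"
    using rep_conj[OF inv(1), of bs \<psi>] rep1_conj[OF inv(1), of bs \<psi>] by simp_all
  moreover have "rep bs \<phi> \<Longrightarrow> rep bs \<psi>" "rep1 bs \<phi> \<Longrightarrow> rep1 bs \<psi>"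
    unfolding \<psi>_def by (fact rep_conj[OF inv(2)], fact rep1_conj[OF inv(2)])
  ultimately show ?thesis
    unfolding \<psi>_def by blast
qed

lemma sl2_normal_form_eigenvalue:
  assumes "sl2_normal_form bs \<psi> l e"
  shows "is_eigenvalue bs l"
proof -
  obtain s j k where "top_supported bs l s" "(j, k) \<in> idx bs" "s (j, k) \<noteq> 0"
    using assms by (auto simp: sl2_normal_form_def)
  then have "fst (bs ! j) = l" "j < length bs" "1 \<le> snd (bs ! j)"
    by (auto simp: top_supported_def idx_def)
  then show ?thesis
    using is_eigenvalue_block by blast
qed

lemma sl2_normal_form_det:
  assumes "sl2_normal_form bs \<psi> l e" "e \<in> {1, -1}"
  shows "det (\<psi> uel) = - (l ^ 2 / 4)"
  using assms by (auto simp: sl2_normal_form_def det_2 Hm_nth power2_eq_square)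

lemma ffun_eq_0:
  assumes "is_eigenvalue bs l" "l \<noteq> 0" "det (\<phi> uel) = - (l ^ 2 / 4)"
  shows "ffun bs \<phi> = 0"
proof -
  have "{l. is_eigenvalue bs l \<and> l \<noteq> 0} \<subseteq> fst ` set bs"
    using is_eigenvalue_imp_block by fastforce
  then have "finite {l. is_eigenvalue bs l \<and> l \<noteq> 0}"
    by (rule finite_subset) simp
  then show ?thesis
    unfolding ffun_def using assms by (intro prod_zero) auto
qed

lemma sl2_normal_form_imp_blocks:
  assumes "sl2_normal_form bs \<psi> l e"
  shows "(\<forall>j < length bs. fst (bs ! j) \<noteq> l \<longrightarrow>
            (\<forall>k. 1 \<le> k \<and> k \<le> snd (bs ! j) \<longrightarrow> \<psi> (zel j k) = 0))
       \<and> (\<forall>j < length bs. fst (bs ! j) = l \<longrightarrow>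
            (\<exists>t :: nat \<Rightarrow> complex. (\<forall>k. 1 \<le> k \<and> k \<le> snd (bs ! j) \<longrightarrow>
                \<psi> (zel j k) = msc (t k) (Xe e)) \<and> (\<forall>k. 1 \<le> k \<and> k < snd (bs ! j) \<longrightarrow> t k = 0)))
       \<and> (\<exists>j < length bs. fst (bs ! j) = l \<and> \<psi> (zel j (snd (bs ! j))) \<noteq> 0)"
proof -
  obtain s where top: "top_supported bs l s" and "\<exists>p\<in>idx bs. s p \<noteq> 0"
    and \<psi>: "\<And>j k. (j, k) \<in> idx bs \<Longrightarrow> \<psi> (zel j k) = msc (s (j, k)) (Xe e)"
    using assms by (auto simp: sl2_normal_form_def)
  then obtain j k where jk: "(j, k) \<in> idx bs" "s (j, k) \<noteq> 0"
    by auto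
  have "fst (bs ! j) = l" "k = snd (bs ! j)"
    using top jk by (auto simp: top_supported_def)
  moreover have "\<psi> (zel j k) \<noteq> 0"
    using \<psi>[OF jk(1)] jk(2) by (simp add: msc_eq_0_iff Xe_nonzero)
  ultimately have "\<exists>j < length bs. fst (bs ! j) = l \<and> \<psi> (zel j (snd (bs ! j))) \<noteq> 0"
    using jk(1) by (auto simp: idx_def)
  moreover have "(j, k) \<in> idx bs \<Longrightarrow> s (j, k) \<noteq> 0 \<Longrightarrow> fst (bs ! j) = l \<and> k = snd (bs ! j)"
    for j k
    using top by (simp add: top_supported_def)
  ultimately show ?thesis
    using \<psi> by (fastforce simp: idx_def intro!: exI[of _ "\<lambda>k. s (_, k)"])
qed

lemma sl2_normal_formI:
  assumes "\<forall>b \<in> set bs. 1 \<le> snd b" and "\<psi> uel = msc (l / (2 * of_int e)) Hm"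
    and other: "\<forall>j < length bs. fst (bs ! j) \<noteq> l \<longrightarrow>
            (\<forall>k. 1 \<le> k \<and> k \<le> snd (bs ! j) \<longrightarrow> \<psi> (zel j k) = 0)"
    and same: "\<forall>j < length bs. fst (bs ! j) = l \<longrightarrow>
            (\<exists>t :: nat \<Rightarrow> complex. (\<forall>k. 1 \<le> k \<and> k \<le> snd (bs ! j) \<longrightarrow>
                \<psi> (zel j k) = msc (t k) (Xe e)) \<and> (\<forall>k. 1 \<le> k \<and> k < snd (bs ! j) \<longrightarrow> t k = 0))"
    and top: "\<exists>j < length bs. fst (bs ! j) = l \<and> \<psi> (zel j (snd (bs ! j))) \<noteq> 0"
  shows "sl2_normal_form bs \<psi> l e"
proof -
  obtain T where T: "\<And>j k. j < length bs \<Longrightarrow> fst (bs ! j) = l \<Longrightarrow> 1 \<le> k \<Longrightarrow> k \<le> snd (bs ! j)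
      \<Longrightarrow> \<psi> (zel j k) = msc (T j k) (Xe e) \<and> (k < snd (bs ! j) \<longrightarrow> T j k = 0)"
    using same by metis
  define s where "s p = (if fst (bs ! fst p) = l \<and> snd p = snd (bs ! fst p) then T (fst p) (snd p) else 0)"
    for p
  have \<psi>: "\<psi> (zel j k) = msc (s (j, k)) (Xe e)" if "(j, k) \<in> idx bs" for j k
    using that other T[of j k] by (cases "k = snd (bs ! j)") (auto simp: s_def idx_def)
  have "top_supported bs l s"
    by (auto simp: top_supported_def s_def)
  moreover obtain j where j: "j < length bs" "fst (bs ! j) = l" "\<psi> (zel j (snd (bs ! j))) \<noteq> 0"
    using top by blast
  moreover have "(j, snd (bs ! j)) \<in> idx bs"
    using assms(1) j(1) by (simp add: idx_def)
  ultimately show ?thesis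
    using assms(2) \<psi> unfolding sl2_normal_form_def by (metis msc_0)
qed

lemma rep_not_rep1_exists:
  assumes "\<forall>b \<in> set bs. 1 \<le> snd b" "j < length bs" "fst (bs ! j) \<noteq> 0"
  shows "\<exists>\<phi>. rep bs \<phi> \<and> \<not> rep1 bs \<phi>"
proof -
  define l r where "l = fst (bs ! j)" and "r = snd (bs ! j)"
  define \<phi> where "\<phi> x = msc (snd x * (l / 2)) Hm + msc (fst x (j, r)) Xp" for x :: hel
  have "hom bs \<phi>"
    by (simp add: hom_def \<phi>_def hadd_def hscale_def trace_mat2 mat2_eq_iff Hm_nth Xp_nth field_simps)
  moreover have "sl2_normal_form bs \<phi> l 1"
    unfolding sl2_normal_form_def
  proof (intro conjI exI[of _ "\<lambda>p. if p = (j, r) then 1 else 0"])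
    show "\<phi> uel = msc (l / (2 * of_int 1)) Hm"
      by (simp add: \<phi>_def uel_def mat2_eq_iff)
    show "top_supported bs l (\<lambda>p. if p = (j, r) then 1 else 0)"
      by (simp add: top_supported_def l_def r_def)
    show "\<exists>p\<in>idx bs. (if p = (j, r) then 1 else 0) \<noteq> (0::complex)"
      using assms by (auto simp: idx_def r_def)
    show "\<forall>j' k. (j', k) \<in> idx bs \<longrightarrow> \<phi> (zel j' k) = msc (if (j', k) = (j, r) then 1 else 0) (Xe 1)"
      by (auto simp: \<phi>_def zel_def Xe_def)
  qed
  moreover have "l \<noteq> 0"
    using assms(3) by (simp add: l_def)
  ultimately show ?thesis
    using sl2_normal_form_rep[of bs \<phi> 1 l] by auto
qed

lemma sl2_normal_form_iff:
  assumes "\<forall>b \<in> set bs. 1 \<le> snd b"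
  shows "sl2_normal_form bs \<psi> l e \<longleftrightarrow> \<psi> uel = msc (l / (2 * of_int e)) Hm
       \<and> ((\<forall>j < length bs. fst (bs ! j) \<noteq> l \<longrightarrow>
            (\<forall>k. 1 \<le> k \<and> k \<le> snd (bs ! j) \<longrightarrow> \<psi> (zel j k) = 0))
       \<and> (\<forall>j < length bs. fst (bs ! j) = l \<longrightarrow>
            (\<exists>t :: nat \<Rightarrow> complex. (\<forall>k. 1 \<le> k \<and> k \<le> snd (bs ! j) \<longrightarrow>
                \<psi> (zel j k) = msc (t k) (Xe e)) \<and> (\<forall>k. 1 \<le> k \<and> k < snd (bs ! j) \<longrightarrow> t k = 0)))
       \<and> (\<exists>j < length bs. fst (bs ! j) = l \<and> \<psi> (zel j (snd (bs ! j))) \<noteq> 0))"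
    (is "_ \<longleftrightarrow> _ \<and> ?blocks")
proof
  assume nf: "sl2_normal_form bs \<psi> l e"
  then have "\<psi> uel = msc (l / (2 * of_int e)) Hm"
    by (simp add: sl2_normal_form_def)
  then show "\<psi> uel = msc (l / (2 * of_int e)) Hm \<and> ?blocks"
    using sl2_normal_form_imp_blocks[OF nf] by (rule conjI)
next
  assume "\<psi> uel = msc (l / (2 * of_int e)) Hm \<and> ?blocks"
  then show "sl2_normal_form bs \<psi> l e"
    by (elim conjE) (rule sl2_normal_formI[OF assms])
qed

lemma rep_not_rep1_iff_normal_form:
  "rep bs \<phi> \<and> \<not> rep1 bs \<phi> \<longleftrightarrow> (\<exists>l e P. is_eigenvalue bs l \<and> l \<noteq> 0 \<and> e \<in> {1, -1} \<and> invertible P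
     \<and> sl2_normal_form bs (\<lambda>x. P ** \<phi> x ** matrix_inv P) l e)"
  if "hom bs \<phi>"
proof
  assume "rep bs \<phi> \<and> \<not> rep1 bs \<phi>"
  then obtain l P where "l \<noteq> 0" "invertible P" "sl2_normal_form bs (\<lambda>x. P ** \<phi> x ** matrix_inv P) l 1"
    using rep_not_rep1_normal_form by blast
  then show "\<exists>l e P. is_eigenvalue bs l \<and> l \<noteq> 0 \<and> e \<in> {1, -1} \<and> invertible P
     \<and> sl2_normal_form bs (\<lambda>x. P ** \<phi> x ** matrix_inv P) l e"
    using sl2_normal_form_eigenvalue by blast
next
  assume "\<exists>l e P. is_eigenvalue bs l \<and> l \<noteq> 0 \<and> e \<in> {1, -1} \<and> invertible P
     \<and> sl2_normal_form bs (\<lambda>x. P ** \<phi> x ** matrix_inv P) l e"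
  then obtain l e P where "l \<noteq> 0" "e \<in> {1, -1}" "invertible P"
    "sl2_normal_form bs (\<lambda>x. P ** \<phi> x ** matrix_inv P) l e"
    by blast
  moreover have "hom bs (\<lambda>x. P ** \<phi> x ** matrix_inv P)"
    using hom_conj[OF matrix_inv_invertible(2)[OF \<open>invertible P\<close>] that] .
  ultimately show "rep bs \<phi> \<and> \<not> rep1 bs \<phi>"
    using sl2_normal_form_rep rep_not_rep1_conj_iff by blast
qed

lemma rep_not_rep1_ffun_eq_0:
  assumes "rep bs \<phi>" "\<not> rep1 bs \<phi>"
  shows "ffun bs \<phi> = 0"
proof -
  obtain l P where "l \<noteq> 0" "invertible P" and nf: "sl2_normal_form bs (\<lambda>x. P ** \<phi> x ** matrix_inv P) l 1"
    using rep_not_rep1_normal_form[OF assms] by blast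
  moreover have "det (\<phi> uel) = - (l ^ 2 / 4)"
    using sl2_normal_form_det[OF nf] det_conj[OF \<open>invertible P\<close>] by simp
  ultimately show ?thesis
    using ffun_eq_0 sl2_normal_form_eigenvalue by blast
qed

lemma rep_eq_rep1_iff_h_nilpotent:
  assumes "\<forall>b \<in> set bs. 1 \<le> snd b"
  shows "(\<forall>\<phi>. rep bs \<phi> \<longleftrightarrow> rep1 bs \<phi>) \<longleftrightarrow> h_nilpotent bs"
proof
  assume "\<forall>\<phi>. rep bs \<phi> \<longleftrightarrow> rep1 bs \<phi>"
  then show "h_nilpotent bs"
    using rep_not_rep1_exists[OF assms] h_nilpotent_iff[OF assms] by blast
next
  assume "h_nilpotent bs"
  then have zero: "\<forall>j<length bs. fst (bs ! j) = 0"
    using h_nilpotent_iff[OF assms] by blast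
  have "rep1 bs \<phi>" if rep: "rep bs \<phi>" for \<phi>
  proof (rule ccontr)
    assume "\<not> rep1 bs \<phi>"
    then obtain l P where "l \<noteq> 0" "sl2_normal_form bs (\<lambda>x. P ** \<phi> x ** matrix_inv P) l 1"
      using rep_not_rep1_normal_form[OF rep] by blast
    then show False
      using sl2_normal_form_eigenvalue is_eigenvalue_imp_block zero by metis
  qed
  then show "\<forall>\<phi>. rep bs \<phi> \<longleftrightarrow> rep1 bs \<phi>"
    by (auto simp: rep1_def)
qed

theorem lemma4p2:
  fixes bs :: "(complex \<times> nat) list"
  assumes "\<forall>b \<in> set bs. 1 \<le> snd b"
  shows "(\<not> h_nilpotent bs \<longrightarrow>
           (\<forall>\<phi>. hom bs \<phi> \<longrightarrow>
              ((rep bs \<phi> \<and> \<not> rep1 bs \<phi>) \<longleftrightarrow>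
                (\<exists>l e P. is_eigenvalue bs l \<and> l \<noteq> 0 \<and> e \<in> {1, -1} \<and> invertible P \<and>
                   (let \<psi> = (\<lambda>x. P ** \<phi> x ** matrix_inv P) in
                     \<psi> uel = msc (l / (2 * of_int e)) Hm
                   \<and> (\<forall>j < length bs. fst (bs ! j) \<noteq> l \<longrightarrow>
                        (\<forall>k. 1 \<le> k \<and> k \<le> snd (bs ! j) \<longrightarrow> \<psi> (zel j k) = 0))
                   \<and> (\<forall>j < length bs. fst (bs ! j) = l \<longrightarrow>
                        (\<exists>t :: nat \<Rightarrow> complex. (\<forall>k. 1 \<le> k \<and> k \<le> snd (bs ! j) \<longrightarrow>
                            \<psi> (zel j k) = msc (t k) (Xe e)) \<and>
                          (\<forall>k. 1 \<le> k \<and> k < snd (bs ! j) \<longrightarrow> t k = 0)))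
                   \<and> (\<exists>j < length bs. fst (bs ! j) = l \<and> \<psi> (zel j (snd (bs ! j))) \<noteq> 0))))
              \<and> (rep bs \<phi> \<and> \<not> rep1 bs \<phi> \<longrightarrow> ffun bs \<phi> = 0)))
         \<and> ((\<forall>\<phi>. rep bs \<phi> \<longleftrightarrow> rep1 bs \<phi>) \<longleftrightarrow> h_nilpotent bs)"
proof -
  have normal_form: "(let \<psi> = (\<lambda>x. P ** \<phi> x ** matrix_inv P) in
        \<psi> uel = msc (l / (2 * of_int e)) Hm
      \<and> (\<forall>j < length bs. fst (bs ! j) \<noteq> l \<longrightarrow>
          (\<forall>k. 1 \<le> k \<and> k \<le> snd (bs ! j) \<longrightarrow> \<psi> (zel j k) = 0))
      \<and> (\<forall>j < length bs. fst (bs ! j) = l \<longrightarrow>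
          (\<exists>t :: nat \<Rightarrow> complex. (\<forall>k. 1 \<le> k \<and> k \<le> snd (bs ! j) \<longrightarrow>
              \<psi> (zel j k) = msc (t k) (Xe e)) \<and> (\<forall>k. 1 \<le> k \<and> k < snd (bs ! j) \<longrightarrow> t k = 0)))
      \<and> (\<exists>j < length bs. fst (bs ! j) = l \<and> \<psi> (zel j (snd (bs ! j))) \<noteq> 0))
    \<longleftrightarrow> sl2_normal_form bs (\<lambda>x. P ** \<phi> x ** matrix_inv P) l e" for P \<phi> l e
    unfolding Let_def by (rule sl2_normal_form_iff[OF assms, symmetric])
  show ?thesis
    unfolding normal_form
    using rep_not_rep1_iff_normal_form rep_not_rep1_ffun_eq_0 rep_eq_rep1_iff_h_nilpotent[OF assms]
    by blast
qed

end
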